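(* Let $L\ge 1$, let $M_1,\dots,M_5\ge 2$, $N_1,\dots,N_4\ge 1$, and let $K_5\ge 2$ be an integer. For $l=1,\dots,L$ and $n=1,\dots,5$ let $\omega_{l,n}\in\mathbb{R}$, and put $\boldsymbol{\Phi}_n=\mathrm{Diag}(e^{\jmath\omega_{1,n}},\dots,e^{\jmath\omega_{L,n}})$. For $n=1,2,3,4$ assume the following: (i) $\boldsymbol{T}_n\in\mathbb{C}^{M_n\times N_n}$ satisfies $\boldsymbol{J}_{n,1}\boldsymbol{T}_n=\boldsymbol{J}_{n,2}\boldsymbol{T}_n\boldsymbol{F}_n$ for some non-singular $\boldsymbol{F}_n\in\mathbb{C}^{N_n\times N_n}$, where $\boldsymbol{J}_{n,1}=[\boldsymbol{I}_{M_n-1},\boldsymbol{0}_{(M_n-1)\times 1}]$ and $\boldsymbol{J}_{n,2}=[\boldsymbol{0}_{(M_n-1)\times 1},\boldsymbol{I}_{M_n-1}]$; (ii) writing $\boldsymbol{T}_n^{\mathrm{H}}=[\boldsymbol{t}_{n,1},\dots,\boldsymbol{t}_{n,M_n}]$ with $\boldsymbol{t}_{n,m}\in\mathbb{C}^{N_n}$, $\boldsymbol{Q}_n\in\mathbb{C}^{N_n\times N_n}$ is a matrix with $\boldsymbol{Q}_n\boldsymbol{t}_{n,M_n}=\boldsymbol{0}$ and $\boldsymbol{Q}_n\boldsymbol{F}_n^{\mathrm{H}}\boldsymbol{t}_{n,1}=\boldsymbol{0}$, and $\boldsymbol{L}_{n,1}=\boldsymbol{Q}_n$, $\boldsymbol{L}_{n,2}=\boldsymbol{Q}_n\boldsymbol{F}_n^{\mathrm{H}}$.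 Let $\boldsymbol{B}_n=\boldsymbol{T}_n^{\mathrm{H}}\boldsymbol{A}_n^{(M_n)}$ for $n=1,\dots,4$ and $\boldsymbol{P}=\boldsymbol{B}_1\odot\boldsymbol{B}_2\odot\boldsymbol{B}_3\odot\boldsymbol{B}_4\odot\boldsymbol{A}_5^{(K_5)}$. Define, for $i=1,2$, $\breve{\boldsymbol{J}}_{n,i}=\boldsymbol{I}_{N_1}\otimes\cdots\otimes\boldsymbol{L}_{n,i}\otimes\cdots\otimes\boldsymbol{I}_{N_4}\otimes\boldsymbol{I}_{K_5}$ for $n=1,2,3,4$ (with $\boldsymbol{L}_{n,i}$ in the $n$-th Kronecker factor and identities $\boldsymbol{I}_{N_k}$ in the other factors $k\neq n$, $k\le 4$), and $\breve{\boldsymbol{J}}_{5,i}=\boldsymbol{I}_{N_1}\otimes\boldsymbol{I}_{N_2}\otimes\boldsymbol{I}_{N_3}\otimes\boldsymbol{I}_{N_4}\otimes\bar{\boldsymbol{J}}_{5,i}$, where $\bar{\boldsymbol{J}}_{5,1}=[\boldsymbol{I}_{K_5-1},\boldsymbol{0}_{(K_5-1)\times1}]$ and $\bar{\boldsymbol{J}}_{5,2}=[\boldsymbol{0}_{(K_5-1)\times1},\boldsymbol{I}_{K_5-1}]$. Then for every $n=1,\dots,5$, $$\breve{\boldsymbol{J}}_{n,1}\boldsymbol{P}\boldsymbol{\Phi}_n=\breve{\boldsymbol{J}}_{n,2}\boldsymbol{P}.$$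
   Context: $\jmath$ is the imaginary unit. For $M\ge1$ and $\omega\in\mathbb{R}$, $\boldsymbol{a}^{(M)}(\omega)=[1,e^{\jmath\omega},\dots,e^{\jmath(M-1)\omega}]^{\mathrm{T}}$, and for any positive integer $K$, $\boldsymbol{A}_n^{(K)}=[\boldsymbol{a}^{(K)}(\omega_{1,n}),\dots,\boldsymbol{a}^{(K)}(\omega_{L,n})]\in\mathbb{C}^{K\times L}$. $\otimes$ is the Kronecker product and $\odot$ is the Khatri–Rao (column-wise Kronecker) product. $(\cdot)^{\mathrm{H}}$ is conjugate transpose. *)

theory Defs
  imports Complex_Main "Jordan_Normal_Form.Schur_Decomposition"
begin

definition kron :: "complex mat \<Rightarrow> complex mat \<Rightarrow> complex mat" where
  "kron A B = mat (dim_row A * dim_row B) (dim_col A * dim_col B)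
     (\<lambda>(r, c). A $$ (r div dim_row B, c div dim_col B) * B $$ (r mod dim_row B, c mod dim_col B))"

definition khatri_rao :: "complex mat \<Rightarrow> complex mat \<Rightarrow> complex mat" where
  "khatri_rao A B = mat (dim_row A * dim_row B) (dim_col A)
     (\<lambda>(r, c). A $$ (r div dim_row B, c) * B $$ (r mod dim_row B, c))"

text \<open>Steering matrix A_n^(K) = [a^(K)(omega_{1,n}), ..., a^(K)(omega_{L,n})];
  omega l n is omega_{l,n} (l = 1..L); row k (0-based) of column l is exp(j k omega_{l,n}).\<close>
definition steer :: "nat \<Rightarrow> nat \<Rightarrow> (nat \<Rightarrow> nat \<Rightarrow> real) \<Rightarrow> nat \<Rightarrow> complex mat" where
  "steer K L omega n = mat K L (\<lambda>(k, l). exp (\<i> * complex_of_real (real k * omega (Suc l) n)))"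

definition Phi :: "nat \<Rightarrow> (nat \<Rightarrow> nat \<Rightarrow> real) \<Rightarrow> nat \<Rightarrow> complex mat" where
  "Phi L omega n = mat L L (\<lambda>(i, j). if i = j then exp (\<i> * complex_of_real (omega (Suc i) n)) else 0)"

definition sel1 :: "nat \<Rightarrow> complex mat" where
  "sel1 M = mat (M - 1) M (\<lambda>(i, j). if j = i then 1 else 0)"

definition sel2 :: "nat \<Rightarrow> complex mat" where
  "sel2 M = mat (M - 1) M (\<lambda>(i, j). if j = i + 1 then 1 else 0)"

end

theory Submission imports Defs begin

text \<open>Everything reduces to shift invariances of single factors. For a steering matrix, deleting
  the last row and multiplying by \<open>\<Phi>\<^sub>n\<close> is the same as deleting the first row:
  \<open>J\<^sub>1 A \<Phi> = J\<^sub>2 A\<close>. For a transformed factor \<open>B = T\<^sup>H A\<close>, the adjoint of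
  \<open>J\<^sub>1 T = J\<^sub>2 T F\<close> reads \<open>T\<^sup>H J\<^sub>1\<^sup>H = F\<^sup>H T\<^sup>H J\<^sub>2\<^sup>H\<close>, and the conditions on \<open>Q\<close>
  say exactly that \<open>Q T\<^sup>H\<close> and \<open>Q F\<^sup>H T\<^sup>H\<close> are fixed by the coordinate projections
  \<open>J\<^sub>1\<^sup>H J\<^sub>1\<close> and \<open>J\<^sub>2\<^sup>H J\<^sub>2\<close>; hence
  \<open>Q B \<Phi> = Q T\<^sup>H J\<^sub>1\<^sup>H J\<^sub>1 A \<Phi> = Q T\<^sup>H J\<^sub>1\<^sup>H J\<^sub>2 A = Q F\<^sup>H T\<^sup>H J\<^sub>2\<^sup>H J\<^sub>2 A = Q F\<^sup>H B\<close>.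
  The mixed-product rule \<open>(A \<otimes> B)(X \<odot> Y) = A X \<odot> B Y\<close>, together with the fact that a diagonal
  matrix can be moved into either Khatri-Rao factor, lifts such a one-factor invariance to
  the whole Khatri-Rao product.\<close>

lemma sum_lessThan_mult_nat:
  "(\<Sum>k<a * b. f k) = (\<Sum>i<a. \<Sum>j<b. f (i * b + j :: nat) :: 'a::comm_monoid_add)"
proof -
  have "sum f {i * b..<i * b + b} = (\<Sum>j<b. f (i * b + j))" for i
    using sum.shift_bounds_nat_ivl[of f 0 "i * b" b] by (simp add: lessThan_atLeast0 add.commute)
  then show ?thesis by (simp add: sum.nat_group[symmetric])
qed

lemma mat_adjoint_altdef:
  "mat_adjoint A = mat (dim_col A) (dim_row A) (\<lambda>(i, j). conjugate (A $$ (j, i)))"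
  unfolding mat_adjoint_def by (rule eq_matI) (auto simp: mat_of_rows_index)

lemma dim_mat_adjoint [simp]:
  "dim_row (mat_adjoint A) = dim_col A" "dim_col (mat_adjoint A) = dim_row A"
  by (simp_all add: mat_adjoint_altdef)

lemma mat_adjoint_carrier [simp]: "A \<in> carrier_mat m n \<Longrightarrow> mat_adjoint A \<in> carrier_mat n m"
  by (simp add: mat_adjoint_altdef)

lemma mat_adjoint_mult:
  assumes "A \<in> carrier_mat m n" and "B \<in> carrier_mat n p"
  shows "mat_adjoint (A * B) = mat_adjoint B * mat_adjoint A"
  using assms
  by (intro eq_matI)
    (auto simp: mat_adjoint_altdef scalar_prod_def sum_conjugate conjugate_dist_mul mult.commute)

lemma index_mult_diagonal_mat:
  assumes "diagonal_mat D" "D \<in> carrier_mat n n" "i < dim_row X" "j < n" "dim_col X = n"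
  shows "(X * D) $$ (i, j) = X $$ (i, j) * D $$ (j, j)"
proof -
  have "(X * D) $$ (i, j) = (\<Sum>k\<in>{0..<n}. X $$ (i, k) * D $$ (k, j))"
    using assms by (simp add: scalar_prod_def)
  also have "\<dots> = (\<Sum>k\<in>{0..<n}. if k = j then X $$ (i, k) * D $$ (k, j) else 0)"
    using assms by (intro sum.cong) (auto simp: diagonal_mat_def)
  also have "\<dots> = X $$ (i, j) * D $$ (j, j)"
    using assms by simp
  finally show ?thesis .
qed

lemma dim_khatri_rao [simp]:
  "dim_row (khatri_rao X Y) = dim_row X * dim_row Y" "dim_col (khatri_rao X Y) = dim_col X"
  by (simp_all add: khatri_rao_def)

lemma dim_kron [simp]:
  "dim_row (kron A B) = dim_row A * dim_row B" "dim_col (kron A B) = dim_col A * dim_col B"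
  by (simp_all add: kron_def)

lemma div_mod_less_of_less_mult:
  assumes "r < m * (n :: nat)"
  shows "r div n < m" "r mod n < n"
  using assms by (simp_all add: less_mult_imp_div_less) (cases "n = 0"; simp)

lemma kron_mult_khatri_rao:
  assumes A: "A \<in> carrier_mat m1 n1" and B: "B \<in> carrier_mat m2 n2"
    and X: "X \<in> carrier_mat n1 c" and Y: "Y \<in> carrier_mat n2 c"
  shows "kron A B * khatri_rao X Y = khatri_rao (A * X) (B * Y)"
proof (rule eq_matI)
  fix r j assume "r < dim_row (khatri_rao (A * X) (B * Y))" and "j < dim_col (khatri_rao (A * X) (B * Y))"
  then have r: "r < m1 * m2" and j: "j < c" using A B X by auto
  note rdm = div_mod_less_of_less_mult[OF r]
  have "(kron A B * khatri_rao X Y) $$ (r, j) = (\<Sum>k<n1 * n2.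
      (A $$ (r div m2, k div n2) * B $$ (r mod m2, k mod n2)) * (X $$ (k div n2, j) * Y $$ (k mod n2, j)))"
    using A B X Y r j by (simp add: kron_def khatri_rao_def scalar_prod_def lessThan_atLeast0)
  also have "\<dots> = (\<Sum>i<n1. \<Sum>l<n2. (A $$ (r div m2, i) * X $$ (i, j)) * (B $$ (r mod m2, l) * Y $$ (l, j)))"
    by (subst sum_lessThan_mult_nat) (auto intro!: sum.cong simp: mult_ac)
  also have "\<dots> = (\<Sum>i<n1. A $$ (r div m2, i) * X $$ (i, j)) * (\<Sum>l<n2. B $$ (r mod m2, l) * Y $$ (l, j))"
    by (simp add: sum_product)
  also have "\<dots> = khatri_rao (A * X) (B * Y) $$ (r, j)"
    using A B X Y r j rdm by (simp add: khatri_rao_def scalar_prod_def lessThan_atLeast0)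
  finally show "(kron A B * khatri_rao X Y) $$ (r, j) = khatri_rao (A * X) (B * Y) $$ (r, j)" .
qed (use A B X Y in auto)

lemma khatri_rao_mult_diagonal_mat:
  assumes D: "diagonal_mat D" "D \<in> carrier_mat c c"
    and X: "X \<in> carrier_mat m c" and Y: "Y \<in> carrier_mat n c"
  shows "khatri_rao X Y * D = khatri_rao (X * D) Y"
    and "khatri_rao X Y * D = khatri_rao X (Y * D)"
proof -
  have left: "(khatri_rao X Y * D) $$ (r, j) = khatri_rao (X * D) Y $$ (r, j)"
    and right: "(khatri_rao X Y * D) $$ (r, j) = khatri_rao X (Y * D) $$ (r, j)"
    if "r < m * n" "j < c" for r j
    using that div_mod_less_of_less_mult[OF that(1)] D X Y
    by (simp_all add: index_mult_diagonal_mat khatri_rao_def del: index_mult_mat(1))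
  show "khatri_rao X Y * D = khatri_rao (X * D) Y"
    by (rule eq_matI) (use D X Y left in \<open>simp_all del: index_mult_mat(1)\<close>)
  show "khatri_rao X Y * D = khatri_rao X (Y * D)"
    by (rule eq_matI) (use D X Y right in \<open>simp_all del: index_mult_mat(1)\<close>)
qed

lemma kron_one_mat [simp]: "kron (1\<^sub>m m) (1\<^sub>m n) = 1\<^sub>m (m * n)"
proof (rule eq_matI)
  fix r c assume "r < dim_row (1\<^sub>m (m * n))" "c < dim_col (1\<^sub>m (m * n))"
  then have "r < m * n" "c < m * n" by auto
  then show "kron (1\<^sub>m m) (1\<^sub>m n) $$ (r, c) = 1\<^sub>m (m * n) $$ (r, c)"
    using div_mod_less_of_less_mult by (auto simp: kron_def) (metis div_mult_mod_eq)
qed (simp_all add: kron_def)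

text \<open>Dimension equations instead of \<open>carrier_mat\<close> premises: every side condition is then
  determined by the conclusion, so the two lemmas chain under \<open>intro\<close> through nested products.\<close>

lemma kron_one_right_khatri_rao_shift:
  assumes dims: "dim_col A = dim_row X" "dim_col A' = dim_row X"
      "dim_row Y = l" "dim_col Y = dim_col X"
    and D: "diagonal_mat D" "dim_row D = dim_col X" "dim_col D = dim_col X"
    and shift: "A * X * D = A' * X"
  shows "kron A (1\<^sub>m l) * khatri_rao X Y * D = kron A' (1\<^sub>m l) * khatri_rao X Y"
proof -
  have "kron A (1\<^sub>m l) * khatri_rao X Y * D = khatri_rao (A * X) Y * D"
    using dims by (subst kron_mult_khatri_rao[where c = "dim_col X"]) auto
  also have "\<dots> = khatri_rao (A * X * D) Y"
    using dims D by (intro khatri_rao_mult_diagonal_mat(1)) auto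
  also have "\<dots> = kron A' (1\<^sub>m l) * khatri_rao X Y"
    using dims by (subst kron_mult_khatri_rao[where c = "dim_col X"]) (auto simp: shift)
  finally show ?thesis .
qed

lemma kron_one_left_khatri_rao_shift:
  assumes dims: "dim_col B = dim_row Y" "dim_col B' = dim_row Y"
      "dim_row X = k" "dim_col X = dim_col Y"
    and D: "diagonal_mat D" "dim_row D = dim_col Y" "dim_col D = dim_col Y"
    and shift: "B * Y * D = B' * Y"
  shows "kron (1\<^sub>m k) B * khatri_rao X Y * D = kron (1\<^sub>m k) B' * khatri_rao X Y"
proof -
  have "kron (1\<^sub>m k) B * khatri_rao X Y * D = khatri_rao X (B * Y) * D"
    using dims by (subst kron_mult_khatri_rao[where c = "dim_col Y"]) auto
  also have "\<dots> = khatri_rao X (B * Y * D)"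
    using dims D by (intro khatri_rao_mult_diagonal_mat(2)) auto
  also have "\<dots> = kron (1\<^sub>m k) B' * khatri_rao X Y"
    using dims by (subst kron_mult_khatri_rao[where c = "dim_col Y"]) (auto simp: shift)
  finally show ?thesis .
qed

lemma dim_Phi [simp]: "dim_row (Phi L omega n) = L" "dim_col (Phi L omega n) = L"
  and dim_steer [simp]: "dim_row (steer K L omega n) = K" "dim_col (steer K L omega n) = L"
  and dim_sel1 [simp]: "dim_row (sel1 M) = M - 1" "dim_col (sel1 M) = M"
  and dim_sel2 [simp]: "dim_row (sel2 M) = M - 1" "dim_col (sel2 M) = M"
  by (simp_all add: Phi_def steer_def sel1_def sel2_def)

lemma Phi_carrier [simp]: "Phi L omega n \<in> carrier_mat L L"
  and steer_carrier [simp]: "steer K L omega n \<in> carrier_mat K L"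
  and sel1_carrier [simp]: "sel1 M \<in> carrier_mat (M - 1) M"
  and sel2_carrier [simp]: "sel2 M \<in> carrier_mat (M - 1) M"
  by (rule carrier_matI; simp)+

lemma diagonal_Phi [simp]: "diagonal_mat (Phi L omega n)"
  by (simp add: Phi_def diagonal_mat_def)

lemma sel1_mult: "X \<in> carrier_mat M n \<Longrightarrow> sel1 M * X = mat (M - 1) n (\<lambda>(i, j). X $$ (i, j))"
  by (rule eq_matI) (auto simp: sel1_def scalar_prod_def if_distrib if_distribR cong: if_cong)

lemma sel2_mult: "X \<in> carrier_mat M n \<Longrightarrow> sel2 M * X = mat (M - 1) n (\<lambda>(i, j). X $$ (Suc i, j))"
  by (rule eq_matI) (auto simp: sel2_def scalar_prod_def if_distrib if_distribR cong: if_cong)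

lemma steer_shift_invariance:
  "sel1 K * steer K L omega n * Phi L omega n = sel2 K * steer K L omega n"
proof (rule eq_matI)
  let ?A = "steer K L omega n"
  fix k l assume "k < dim_row (sel2 K * ?A)" "l < dim_col (sel2 K * ?A)"
  then have k: "k < K - 1" and l: "l < L" by simp_all
  then have "(sel1 K * ?A * Phi L omega n) $$ (k, l) = (sel1 K * ?A) $$ (k, l) * Phi L omega n $$ (l, l)"
    by (intro index_mult_diagonal_mat) auto
  also have "\<dots> = (sel2 K * ?A) $$ (k, l)"
    using k l unfolding sel1_mult[OF steer_carrier] sel2_mult[OF steer_carrier]
    by (simp add: steer_def Phi_def exp_add[symmetric] algebra_simps)
  finally show "(sel1 K * ?A * Phi L omega n) $$ (k, l) = (sel2 K * ?A) $$ (k, l)" .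
qed simp_all

lemma adjoint_sel1_mult_sel1:
  "mat_adjoint (sel1 M) * sel1 M = mat M M (\<lambda>(i, j). if i = j \<and> j < M - 1 then 1 else 0)"
  by (rule eq_matI)
    (auto simp: mat_adjoint_altdef sel1_def scalar_prod_def
      if_distrib[of cnj] if_distrib[of "(*)"] if_distribR cong: if_cong)

lemma adjoint_sel2_mult_sel2:
  "mat_adjoint (sel2 M) * sel2 M = mat M M (\<lambda>(i, j). if i = j \<and> 0 < j then 1 else 0)"
  by (rule eq_matI)
    (auto simp: mat_adjoint_altdef sel2_def scalar_prod_def gr0_conv_Suc
      if_distrib[of cnj] if_distrib[of "(*)"] if_distribR cong: if_cong)

lemma mult_adjoint_sel1_sel1:
  assumes X: "X \<in> carrier_mat n M" and last: "col X (M - 1) = 0\<^sub>v n"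
  shows "X * mat_adjoint (sel1 M) * sel1 M = X"
proof -
  have "X * mat_adjoint (sel1 M) * sel1 M = X * (mat_adjoint (sel1 M) * sel1 M)"
    by (rule assoc_mult_mat[OF X mat_adjoint_carrier[OF sel1_carrier] sel1_carrier])
  also have "\<dots> = X"
  proof (rule eq_matI)
    fix i j assume "i < dim_row X" "j < dim_col X"
    then have i: "i < n" and j: "j < M" using X by auto
    have "(X * (mat_adjoint (sel1 M) * sel1 M)) $$ (i, j) = X $$ (i, j) * (if j < M - 1 then 1 else 0)"
      using X i j by (subst index_mult_diagonal_mat) (auto simp: adjoint_sel1_mult_sel1 diagonal_mat_def)
    also have "\<dots> = X $$ (i, j)"
    proof (cases "j < M - 1")
      case False
      then have "j = M - 1" using j by simp
      then show ?thesis using X i j arg_cong[OF last, of "\<lambda>v. v $ i"] by simp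
    qed simp
    finally show "(X * (mat_adjoint (sel1 M) * sel1 M)) $$ (i, j) = X $$ (i, j)" .
  qed (use X in \<open>simp_all add: adjoint_sel1_mult_sel1\<close>)
  finally show ?thesis .
qed

lemma mult_adjoint_sel2_sel2:
  assumes X: "X \<in> carrier_mat n M" and first: "col X 0 = 0\<^sub>v n"
  shows "X * mat_adjoint (sel2 M) * sel2 M = X"
proof -
  have "X * mat_adjoint (sel2 M) * sel2 M = X * (mat_adjoint (sel2 M) * sel2 M)"
    by (rule assoc_mult_mat[OF X mat_adjoint_carrier[OF sel2_carrier] sel2_carrier])
  also have "\<dots> = X"
  proof (rule eq_matI)
    fix i j assume "i < dim_row X" "j < dim_col X"
    then have i: "i < n" and j: "j < M" using X by auto
    have "(X * (mat_adjoint (sel2 M) * sel2 M)) $$ (i, j) = X $$ (i, j) * (if 0 < j then 1 else 0)"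
      using X i j by (subst index_mult_diagonal_mat) (auto simp: adjoint_sel2_mult_sel2 diagonal_mat_def)
    also have "\<dots> = X $$ (i, j)"
      using X i j arg_cong[OF first, of "\<lambda>v. v $ i"] by (cases "0 < j") auto
    finally show "(X * (mat_adjoint (sel2 M) * sel2 M)) $$ (i, j) = X $$ (i, j)" .
  qed (use X in \<open>simp_all add: adjoint_sel2_mult_sel2\<close>)
  finally show ?thesis .
qed

lemma transformed_steer_shift_invariance:
  assumes T: "T \<in> carrier_mat M N" and F: "F \<in> carrier_mat N N" and Q: "Q \<in> carrier_mat r N"
    and M: "0 < M"
    and shift: "sel1 M * T = sel2 M * T * F"
    and last: "Q *\<^sub>v col (mat_adjoint T) (M - 1) = 0\<^sub>v r"
    and first: "Q *\<^sub>v (mat_adjoint F *\<^sub>v col (mat_adjoint T) 0) = 0\<^sub>v r"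
  shows "Q * (mat_adjoint T * steer M L omega n) * Phi L omega n
       = Q * mat_adjoint F * (mat_adjoint T * steer M L omega n)"
proof -
  let ?J1 = "sel1 M" and ?J2 = "sel2 M" and ?A = "steer M L omega n"
    and ?Th = "mat_adjoint T" and ?Fh = "mat_adjoint F"
  have Th: "?Th \<in> carrier_mat N M" and Fh: "?Fh \<in> carrier_mat N N"
    using T F by simp_all
  have J1h: "mat_adjoint ?J1 \<in> carrier_mat M (M - 1)"
    and J2h: "mat_adjoint ?J2 \<in> carrier_mat M (M - 1)"
    by (intro mat_adjoint_carrier sel1_carrier sel2_carrier)+
  have adjoint_shift: "?Th * mat_adjoint ?J1 = ?Fh * ?Th * mat_adjoint ?J2"
  proof -
    have "?Th * mat_adjoint ?J1 = mat_adjoint (?J1 * T)"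
      by (simp add: mat_adjoint_mult[OF sel1_carrier T])
    also have "\<dots> = mat_adjoint (?J2 * T * F)"
      by (simp add: shift)
    also have "\<dots> = ?Fh * ?Th * mat_adjoint ?J2"
      using T F by (simp add: mat_adjoint_mult[OF mult_carrier_mat[OF sel2_carrier T] F]
          mat_adjoint_mult[OF sel2_carrier T] assoc_mult_mat[OF Fh Th J2h])
    finally show ?thesis .
  qed
  define G where "G = Q * ?Th"
  define H where "H = Q * ?Fh * ?Th"
  have G: "G \<in> carrier_mat r M" and H: "H \<in> carrier_mat r M"
    using Q Th Fh by (simp_all add: G_def H_def)
  have G_last: "col G (M - 1) = 0\<^sub>v r"
    unfolding G_def using M last by (subst col_mult2[OF Q Th]) auto
  have H_first: "col H 0 = 0\<^sub>v r"
    unfolding H_def using Q Fh Th M first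
    by (subst col_mult2[OF mult_carrier_mat[OF Q Fh] Th]) auto
  have GH: "G * mat_adjoint ?J1 = H * mat_adjoint ?J2"
  proof -
    have "G * mat_adjoint ?J1 = Q * (?Th * mat_adjoint ?J1)"
      unfolding G_def using Q Th J1h by (rule assoc_mult_mat)
    also have "\<dots> = Q * (?Fh * (?Th * mat_adjoint ?J2))"
      by (simp only: adjoint_shift assoc_mult_mat[OF Fh Th J2h])
    also have "\<dots> = H * mat_adjoint ?J2"
      unfolding H_def using Q Fh Th J2h
      by (simp only: assoc_mult_mat[OF Q Fh mult_carrier_mat[OF Th J2h]]
          assoc_mult_mat[OF mult_carrier_mat[OF Q Fh] Th J2h])
    finally show ?thesis .
  qed
  have GJ1: "G * mat_adjoint ?J1 \<in> carrier_mat r (M - 1)"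
    and HJ2: "H * mat_adjoint ?J2 \<in> carrier_mat r (M - 1)"
    using G H J1h J2h by simp_all
  have "Q * (?Th * ?A) * Phi L omega n = G * ?A * Phi L omega n"
    unfolding G_def by (simp only: assoc_mult_mat[OF Q Th steer_carrier])
  also have "\<dots> = G * mat_adjoint ?J1 * ?J1 * ?A * Phi L omega n"
    by (simp only: mult_adjoint_sel1_sel1[OF G G_last])
  also have "\<dots> = G * mat_adjoint ?J1 * (?J1 * ?A * Phi L omega n)"
    by (simp only: assoc_mult_mat[OF GJ1 sel1_carrier steer_carrier]
        assoc_mult_mat[OF GJ1 mult_carrier_mat[OF sel1_carrier steer_carrier] Phi_carrier])
  also have "\<dots> = H * mat_adjoint ?J2 * (?J2 * ?A)"
    by (simp only: steer_shift_invariance GH)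
  also have "\<dots> = H * ?A"
    by (simp only: assoc_mult_mat[OF HJ2 sel2_carrier steer_carrier, symmetric]
        mult_adjoint_sel2_sel2[OF H H_first])
  also have "\<dots> = Q * ?Fh * (?Th * ?A)"
    unfolding H_def by (simp only: assoc_mult_mat[OF mult_carrier_mat[OF Q Fh] Th steer_carrier])
  finally show ?thesis .
qed

theorem proposition2:
  fixes L K5 :: nat
    and M N :: "nat \<Rightarrow> nat"
    and omega :: "nat \<Rightarrow> nat \<Rightarrow> real"
    and T F Q :: "nat \<Rightarrow> complex mat"
  assumes L_pos: "L \<ge> 1"
    and M_ge: "\<forall>n\<in>{1..5}. M n \<ge> 2"
    and N_ge: "\<forall>n\<in>{1..4}. N n \<ge> 1"
    and K5_ge: "K5 \<ge> 2"
    and T_dim: "\<forall>n\<in>{1..4}. T n \<in> carrier_mat (M n) (N n)"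
    and F_dim: "\<forall>n\<in>{1..4}. F n \<in> carrier_mat (N n) (N n)"
    and F_inv: "\<forall>n\<in>{1..4}. invertible_mat (F n)"
    and shift: "\<forall>n\<in>{1..4}. sel1 (M n) * T n = sel2 (M n) * T n * F n"
    and Q_dim: "\<forall>n\<in>{1..4}. Q n \<in> carrier_mat (N n) (N n)"
    and Q_last: "\<forall>n\<in>{1..4}. Q n *\<^sub>v col (mat_adjoint (T n)) (M n - 1) = 0\<^sub>v (N n)"
    and Q_first: "\<forall>n\<in>{1..4}. Q n *\<^sub>v (mat_adjoint (F n) *\<^sub>v col (mat_adjoint (T n)) 0) = 0\<^sub>v (N n)"
  shows
    "let Lm = (\<lambda>n (i::nat). if i = 1 then Q n else Q n * mat_adjoint (F n));
         B = (\<lambda>n. mat_adjoint (T n) * steer (M n) L omega n);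
         P = khatri_rao (khatri_rao (khatri_rao (khatri_rao (B 1) (B 2)) (B 3)) (B 4)) (steer K5 L omega 5);
         fac = (\<lambda>n i k. if k = n then Lm n i else 1\<^sub>m (N k));
         Jb = (\<lambda>n i. if n = 5 then
                 kron (kron (kron (kron (1\<^sub>m (N 1)) (1\<^sub>m (N 2))) (1\<^sub>m (N 3))) (1\<^sub>m (N 4)))
                      (if i = 1 then sel1 K5 else sel2 K5)
               else kron (kron (kron (kron (fac n i 1) (fac n i 2)) (fac n i 3)) (fac n i 4)) (1\<^sub>m K5))
     in \<forall>n\<in>{1..5}. Jb n 1 * P * Phi L omega n = Jb n 2 * P"
proof -
  let ?B = "\<lambda>k. mat_adjoint (T k) * steer (M k) L omega k"
  have dim_T: "dim_row (T k) = M k" "dim_col (T k) = N k"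
    and dim_Q: "dim_row (Q k) = N k" "dim_col (Q k) = N k"
    and dim_F: "dim_row (F k) = N k" "dim_col (F k) = N k" if "k \<in> {1..4}" for k
    using T_dim Q_dim F_dim that by auto
  have shift_B: "Q k * ?B k * Phi L omega k = Q k * mat_adjoint (F k) * ?B k"
    if k: "k \<in> {1..4}" for k
  proof (rule transformed_steer_shift_invariance[where N = "N k" and r = "N k"])
    have "2 \<le> M k"
      using M_ge k by simp
    then show "0 < M k" by simp
  qed (use k T_dim F_dim Q_dim shift Q_last Q_first in auto)
  have five: "{1..5} = {1, 2, 3, 4, 5 :: nat}"
    by auto
  show ?thesis
    unfolding Let_def five
    by (simp; intro conjI kron_one_right_khatri_rao_shift kron_one_left_khatri_rao_shift;
        simp add: dim_T dim_Q dim_F shift_B steer_shift_invariance)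
qed

end
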